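(* Let $N\ge1$, $p\ge2$, $w,g\in L^1_{loc}(\mathbb{R}^N)$ positive a.e. with $g^{-1}\in L^\infty(\mathbb{R}^N)$. Let $0<\delta<\gamma$ with $(\delta,p)$ in the class $P_a$. Assume there exist constants $\lambda>0$ and $C>0$ such that $\lambda<pS_p^a$ and $\int_{B_{2R}(0)}w^{S_p^a}dx\le CR^{\lambda}$ for all $R\ge1$. Then there is no $u\in C^1(\mathbb{R}^N)$ with $0<u\le1$ in $\mathbb{R}^N$ which is a stable weak solution of $\operatorname{div}(w|\nabla u|^{p-2}\nabla u)=g(x)(u^{-\delta}+u^{-\gamma})$ in $\mathbb{R}^N$.
   Context: Weak solution and stability are with respect to $f(t)=-t^{-\delta}-t^{-\gamma}$ and the equation $-\operatorname{div}(w|\nabla u|^{p-2}\nabla u)=gf(u)$: $u\in C^1$ is a weak solution if $\int w|\nabla u|^{p-2}\nabla u\cdot\nabla\varphi=\int gf(u)\varphi$ for all $\varphi\in C^1_c(\mathbb{R}^N)$; it is stable if for all $\varphi\in C^1_c(\mathbb{R}^N)$, $\int w|\nabla u|^{p-2}|\nabla\varphi|^2+(p-2)\int w|\nabla u|^{p-4}(\nabla u\cdot\nabla\varphi)^2-\int gf'(u)\varphi^2\ge0$ (middle integrand $=0$ where $\nabla u=0$). Class $P_a$: $(\delta,p)\in P_a$ if either $2\le p<3$ and $\delta\ge1$, or $p=3$ and $\delta>1$, or $p>3$ and $\delta>\frac{(p-1)^2}{4}$. $s_p=\delta+\sqrt{\delta^2+\delta}$ if $p=2$, $s_p=\frac{2\delta}{p-1}-\frac{p-1}{2}$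 if $p>2$; $S_p^a=1+\frac{2s_p}{p-1+\delta}$. $B_r(0)$ is the open ball of radius $r$ centered at the origin. *)

theory Defs
  imports "HOL-Analysis.Analysis"
begin

definition grad :: "('a::euclidean_space \<Rightarrow> real) \<Rightarrow> 'a \<Rightarrow> 'a" where
  "grad u x = (SOME v. (u has_derivative (\<lambda>h. v \<bullet> h)) (at x))"

definition C1 :: "('a::euclidean_space \<Rightarrow> real) \<Rightarrow> bool" where
  "C1 u \<longleftrightarrow> (\<exists>G. continuous_on UNIV G \<and> (\<forall>x. (u has_derivative (\<lambda>h. G x \<bullet> h)) (at x)))"

definition C1c :: "('a::euclidean_space \<Rightarrow> real) \<Rightarrow> bool" where
  "C1c \<phi> \<longleftrightarrow> C1 \<phi> \<and> (\<exists>K. compact K \<and> (\<forall>x. x \<notin> K \<longrightarrow> \<phi> x = 0))"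

definition loc_integrable :: "('a::euclidean_space \<Rightarrow> real) \<Rightarrow> bool" where
  "loc_integrable w \<longleftrightarrow> (\<forall>K. compact K \<longrightarrow> set_integrable lebesgue K w)"

definition fnl :: "real \<Rightarrow> real \<Rightarrow> real \<Rightarrow> real" where
  "fnl \<delta> \<gamma> t = - (t powr (-\<delta>)) - t powr (-\<gamma>)"

text \<open>r^e for r \<ge> 0 with the convention r^0 = 1 (Isabelle has 0 powr 0 = 0).\<close>
definition npow :: "real \<Rightarrow> real \<Rightarrow> real" where
  "npow r e = (if e = 0 then 1 else r powr e)"

definition weak_sol :: "('a::euclidean_space \<Rightarrow> real) \<Rightarrow> ('a \<Rightarrow> real) \<Rightarrow> real \<Rightarrow> real \<Rightarrow> real
    \<Rightarrow> ('a \<Rightarrow> real) \<Rightarrow> bool" where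
  "weak_sol w g \<delta> \<gamma> p u \<longleftrightarrow> C1 u \<and>
     (\<forall>\<phi>. C1c \<phi> \<longrightarrow>
        (LINT x|lebesgue. w x * npow (norm (grad u x)) (p - 2) * (grad u x \<bullet> grad \<phi> x))
        = (LINT x|lebesgue. g x * fnl \<delta> \<gamma> (u x) * \<phi> x))"

definition stable_sol :: "('a::euclidean_space \<Rightarrow> real) \<Rightarrow> ('a \<Rightarrow> real) \<Rightarrow> real \<Rightarrow> real \<Rightarrow> real
    \<Rightarrow> ('a \<Rightarrow> real) \<Rightarrow> bool" where
  "stable_sol w g \<delta> \<gamma> p u \<longleftrightarrow>
     (\<forall>\<phi>. C1c \<phi> \<longrightarrow>
        (LINT x|lebesgue. w x * npow (norm (grad u x)) (p - 2) * (norm (grad \<phi> x))\<^sup>2)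
        + (p - 2) * (LINT x|lebesgue. (if grad u x = 0 then 0 else
              w x * norm (grad u x) powr (p - 4) * (grad u x \<bullet> grad \<phi> x)\<^sup>2))
        - (LINT x|lebesgue. g x * deriv (fnl \<delta> \<gamma>) (u x) * (\<phi> x)\<^sup>2) \<ge> 0)"

definition class_Pa :: "real \<Rightarrow> real \<Rightarrow> bool" where
  "class_Pa \<delta> p \<longleftrightarrow> (2 \<le> p \<and> p < 3 \<and> \<delta> \<ge> 1) \<or> (p = 3 \<and> \<delta> > 1)
                     \<or> (p > 3 \<and> \<delta> > (p - 1)\<^sup>2 / 4)"

definition s_p :: "real \<Rightarrow> real \<Rightarrow> real" where
  "s_p \<delta> p = (if p = 2 then \<delta> + sqrt (\<delta>\<^sup>2 + \<delta>) else 2 * \<delta> / (p - 1) - (p - 1) / 2)"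

definition S_pa :: "real \<Rightarrow> real \<Rightarrow> real" where
  "S_pa \<delta> p = 1 + 2 * s_p \<delta> p / (p - 1 + \<delta>)"

end

theory Submission
  imports Defs
begin

text \<open>Test the equation with \<open>\<phi> = (u + 1) \<psi>^m\<close>, where the cutoff \<open>\<psi>\<close> is \<open>\<ge> 3/4\<close> on \<open>B(0, R)\<close>
  and vanishes outside \<open>B(0, 2R)\<close>. Since \<open>f \<le> -2\<close> on \<open>(0, 1]\<close> and \<open>g \<ge> 1/M\<close>, the right-hand side
  is at most \<open>-c R^N\<close>. On the left, the factor \<open>u + 1\<close> produces the coercive term
  \<open>\<psi>^m |\<nabla>u|^p\<close>, which by a Young-type inequality absorbs the cutoff gradient at the cost of
  \<open>(2m/R)^p \<integral>\<^bsub>B(0,2R)\<^esub> w\<close>. Splitting \<open>w \<le> t^(1-S) w^S + t\<close> with a power \<open>t\<close> of \<open>R\<close>, the growth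
  hypothesis gives \<open>R^(-p-N) \<integral>\<^bsub>B(0,2R)\<^esub> w \<rightarrow> 0\<close> because \<open>\<lambda> < p S\<close>, a contradiction.\<close>

lemma grad_eqI:
  fixes f :: "'a::euclidean_space \<Rightarrow> real"
  assumes "(f has_derivative (\<lambda>h. G \<bullet> h)) (at x)"
  shows "grad f x = G"
proof -
  have "(f has_derivative (\<lambda>h. grad f x \<bullet> h)) (at x)"
    unfolding grad_def by (rule someI[of _ G]) (rule assms)
  then have "(\<lambda>h. grad f x \<bullet> h) = (\<lambda>h. G \<bullet> h)"
    using assms by (rule has_derivative_unique)
  then have "grad f x \<bullet> (grad f x - G) = G \<bullet> (grad f x - G)" by metis
  then have "(grad f x - G) \<bullet> (grad f x - G) = 0" by (simp add: inner_diff_left)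
  then show ?thesis by simp
qed

lemma loc_integrable_borel_measurable:
  fixes w :: "'a::euclidean_space \<Rightarrow> real"
  assumes "loc_integrable w"
  shows "w \<in> borel_measurable lebesgue"
proof (rule borel_measurable_LIMSEQ_real)
  show "(\<lambda>n. indicator (cball 0 (real n)) x * w x) \<longlonglongrightarrow> w x" for x
  proof (rule tendsto_eventually)
    have "indicator (cball 0 (real n)) x * w x = w x" if "n \<ge> nat \<lceil>norm x\<rceil>" for n
      using that by (simp add: indicator_def)
    then show "\<forall>\<^sub>F n in sequentially. indicator (cball 0 (real n)) x * w x = w x"
      using eventually_sequentially by blast
  qed
  show "(\<lambda>x. indicator (cball 0 (real n)) x * w x) \<in> borel_measurable lebesgue" for n
    using assms unfolding loc_integrable_def set_integrable_def
    by (simp add: borel_measurable_integrable)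
qed

lemma integrable_loc_integrable_mult:
  fixes w c :: "'a::euclidean_space \<Rightarrow> real"
  assumes w: "loc_integrable w" and c: "continuous_on UNIV c"
    and K: "compact K" and supp: "\<And>x. x \<notin> K \<Longrightarrow> c x = 0"
  shows "integrable lebesgue (\<lambda>x. w x * c x)"
proof -
  have "compact (c ` K)" using c K by (meson compact_continuous_image continuous_on_subset top_greatest)
  then obtain B where B: "\<And>x. x \<in> K \<Longrightarrow> \<bar>c x\<bar> \<le> B" using compact_imp_bounded bounded_iff
    by (metis image_eqI real_norm_def)
  have "set_integrable lebesgue K w" using w K unfolding loc_integrable_def by simp
  then have "integrable lebesgue (\<lambda>x. B * (indicator K x * w x))" unfolding set_integrable_def by simp
  then show ?thesis
  proof (rule Bochner_Integration.integrable_bound)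
    have "c \<in> borel_measurable lebesgue"
      using borel_measurable_continuous_onI[OF c] by (simp add: measurable_completion)
    then show "(\<lambda>x. w x * c x) \<in> borel_measurable lebesgue"
      using loc_integrable_borel_measurable[OF w] by simp
    show "AE x in lebesgue. norm (w x * c x) \<le> norm (B * (indicator K x * w x))"
    proof (rule AE_I2)
      fix x
      show "norm (w x * c x) \<le> norm (B * (indicator K x * w x))"
      proof (cases "x \<in> K")
        case True
        then have "\<bar>w x\<bar> * \<bar>c x\<bar> \<le> \<bar>w x\<bar> * B" "0 \<le> B" using B[of x] by (auto intro: mult_left_mono)
        then show ?thesis using True by (simp add: abs_mult mult.commute)
      qed (simp add: supp)
    qed
  qed
qed

lemma has_real_derivative_max_0_power:
  assumes m: "2 \<le> m"
  shows "((\<lambda>y::real. (max 0 y) ^ m) has_real_derivative (real m * (max 0 y) ^ (m - 1))) (at y)"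
proof (cases y "0::real" rule: linorder_cases)
  case less
  have "((\<lambda>y::real. 0) has_real_derivative 0) (at y)" by simp
  then have "((\<lambda>y::real. (max 0 y) ^ m) has_real_derivative 0) (at y)"
    by (rule has_field_derivative_transform_within_open[where S="{..<0}"]) (use less m in auto)
  then show ?thesis using less m by (simp add: power_0_left)
next
  case greater
  have "((\<lambda>y::real. y ^ m) has_real_derivative (real m * y ^ (m - 1))) (at y)"
    using DERIV_pow[of m y] by simp
  then have "((\<lambda>y::real. (max 0 y) ^ m) has_real_derivative (real m * y ^ (m - 1))) (at y)"
    by (rule has_field_derivative_transform_within_open[where S="{0<..}"]) (use greater in auto)
  then show ?thesis using greater by simp
next
  case equal
  have "((\<lambda>z::real. (max 0 z) ^ m / z) \<longlongrightarrow> 0) (at 0)"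
  proof (rule Lim_null_comparison)
    show "\<forall>\<^sub>F z in at 0. norm ((max 0 z) ^ m / z) \<le> \<bar>z\<bar> ^ (m - 1)"
    proof (rule always_eventually, rule allI)
      fix z :: real
      have "\<bar>max 0 z\<bar> ^ m \<le> \<bar>z\<bar> ^ m" by (rule power_mono) auto
      also have "\<bar>z\<bar> ^ m = \<bar>z\<bar> ^ (m - 1) * \<bar>z\<bar>" using m by (simp flip: power_Suc2)
      finally show "norm ((max 0 z) ^ m / z) \<le> \<bar>z\<bar> ^ (m - 1)"
        by (cases "z = 0") (auto simp: power_abs divide_le_eq)
    qed
    show "((\<lambda>z::real. \<bar>z\<bar> ^ (m - 1)) \<longlongrightarrow> 0) (at 0)"
      using m by (intro tendsto_eq_intros) auto
  qed
  then show ?thesis using equal m by (simp add: has_field_derivative_iff power_0_left)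
qed

lemma npow_nonneg: "0 \<le> a \<Longrightarrow> 0 \<le> npow a e"
  by (simp add: npow_def)

lemma mult_npow_eq_powr:
  assumes "0 \<le> a" "2 \<le> p"
  shows "a * npow a (p - 2) = a powr (p - 1)"
proof (cases "p = 2 \<or> a = 0")
  case False
  then have "a * a powr (p - 2) = a powr (1 + (p - 2))" using assms powr_mult_base by simp
  then show ?thesis using False by (simp add: npow_def)
qed (use assms in \<open>auto simp: npow_def\<close>)

lemma continuous_on_npow_norm:
  fixes F :: "'a::topological_space \<Rightarrow> 'b::real_normed_vector"
  assumes "continuous_on UNIV F" "2 \<le> p"
  shows "continuous_on UNIV (\<lambda>x. npow (norm (F x)) (p - 2))"
proof (cases "p = 2")
  case False
  have "continuous_on UNIV (\<lambda>x. norm (F x) powr (p - 2))"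
    using assms False by (intro continuous_on_powr' continuous_on_norm continuous_on_const) auto
  then show ?thesis using False by (simp add: npow_def)
qed (simp add: npow_def)

text \<open>In the application \<open>a = |\<nabla>u|\<close>, \<open>z = \<psi>\<close>, \<open>b = |\<nabla>(\<psi>^m)|\<close> and \<open>A = 2m/R\<close>.\<close>

lemma npow_mult_young_lower_bound:
  fixes a b z q A p :: real and m :: nat
  assumes a: "0 \<le> a" and b: "0 \<le> b" and z: "0 \<le> z" "z \<le> 1" and A: "0 < A"
    and p: "2 \<le> p" "p \<le> real m"
    and b_le: "b \<le> A / 2 * z ^ (m - 1)" and q: "z ^ m * a\<^sup>2 - 2 * a * b \<le> q"
  shows "- (A powr p) \<le> npow a (p - 2) * q"
proof (cases "2 * b \<le> z ^ m * a")
  case True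
  have "0 \<le> a * (z ^ m * a - 2 * b)" using True a by simp
  then have "0 \<le> q" using q by (simp add: power2_eq_square algebra_simps)
  then show ?thesis using npow_nonneg[OF a] by (smt (verit) powr_ge_zero zero_le_mult_iff)
next
  case False
  \<comment> \<open>Then \<open>a < A/z\<close>, hence \<open>2 b a^(p-1) \<le> A z^(m-1) (A/z)^(p-1) \<le> A^p\<close>.\<close>
  have m: "2 \<le> m" using p by linarith
  have zm: "z ^ m = z ^ (m - 1) * z" using m by (simp flip: power_Suc2)
  have "0 < b" using False a z by (smt (verit) zero_le_mult_iff zero_le_power)
  then have "0 < z" using b_le z m by (cases "z = 0") (auto simp: power_0_left)
  have "a * z * z ^ (m - 1) < A * z ^ (m - 1)" using False b_le zm by (simp add: algebra_simps)
  then have "a < A / z" using \<open>0 < z\<close> by (simp add: field_simps)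
  then have a_pow: "a powr (p - 1) \<le> A powr (p - 1) / z powr (p - 1)"
    using a p by (metis diff_ge_0_iff_ge dual_order.trans one_le_numeral order_less_imp_le
        powr_divide powr_mono2)
  have z_pow: "z ^ (m - 1) \<le> z powr (p - 1)"
    using z \<open>0 < z\<close> p m by (simp add: powr_realpow[symmetric] of_nat_diff powr_mono')
  have "z ^ (m - 1) / z powr (p - 1) \<le> 1" using z_pow \<open>0 < z\<close> by simp
  then have "A * A powr (p - 1) * (z ^ (m - 1) / z powr (p - 1)) \<le> A * A powr (p - 1)"
    using A by (intro mult_left_le) auto
  moreover have "2 * b * a powr (p - 1) \<le> A * z ^ (m - 1) * (A powr (p - 1) / z powr (p - 1))"
    by (rule mult_mono[OF _ a_pow]) (use b_le b z in auto)
  ultimately have "2 * b * a powr (p - 1) \<le> A * A powr (p - 1)" by (simp add: ac_simps)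
  also have "\<dots> = A powr p" using A by (simp add: powr_mult_base)
  finally have young: "2 * b * a powr (p - 1) \<le> A powr p" .
  have "0 \<le> npow a (p - 2) * z ^ m * a\<^sup>2" using npow_nonneg[OF a] z by simp
  then have "- (A powr p) \<le> npow a (p - 2) * z ^ m * a\<^sup>2 - 2 * b * (a * npow a (p - 2))"
    using young mult_npow_eq_powr[OF a p(1)] by simp
  also have "\<dots> = npow a (p - 2) * (z ^ m * a\<^sup>2 - 2 * a * b)"
    by (simp add: power2_eq_square algebra_simps)
  also have "\<dots> \<le> npow a (p - 2) * q"
    using q npow_nonneg[OF a] by (rule mult_left_mono)
  finally show ?thesis .
qed

definition cutoff :: "real \<Rightarrow> 'a::euclidean_space \<Rightarrow> real" where
  "cutoff R x = max 0 (1 - (x \<bullet> x) / (4 * R\<^sup>2))"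

definition cutoff_power_grad :: "real \<Rightarrow> nat \<Rightarrow> 'a::euclidean_space \<Rightarrow> 'a" where
  "cutoff_power_grad R m x = (real m * cutoff R x ^ (m - 1) * (- 1 / (2 * R\<^sup>2))) *\<^sub>R x"

lemma cutoff_power_has_derivative:
  fixes x :: "'a::euclidean_space"
  assumes m: "2 \<le> m" and R: "0 < R"
  shows "((\<lambda>x. cutoff R x ^ m) has_derivative (\<lambda>h. cutoff_power_grad R m x \<bullet> h)) (at x)"
proof -
  let ?y = "\<lambda>x::'a. 1 - (x \<bullet> x) / (4 * R\<^sup>2)"
  have "(?y has_derivative (\<lambda>h. - ((h \<bullet> x + x \<bullet> h) / (4 * R\<^sup>2)))) (at x)"
    using R by (auto intro!: derivative_eq_intros simp: fun_eq_iff power2_eq_square power4_eq_xxxx field_simps)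
  moreover have "((\<lambda>y. (max 0 y) ^ m) has_derivative (\<lambda>t. real m * (max 0 (?y x)) ^ (m - 1) * t)) (at (?y x))"
    using has_real_derivative_max_0_power[OF m] unfolding has_field_derivative_def by blast
  ultimately have "((\<lambda>x. (max 0 (?y x)) ^ m) has_derivative
      (\<lambda>h. real m * (max 0 (?y x)) ^ (m - 1) * - ((h \<bullet> x + x \<bullet> h) / (4 * R\<^sup>2)))) (at x)"
    by (rule has_derivative_compose)
  then show ?thesis
    unfolding cutoff_def cutoff_power_grad_def
    by (rule has_derivative_eq_rhs) (use R in \<open>auto simp: inner_commute fun_eq_iff field_simps\<close>)
qed

lemma continuous_on_cutoff: "continuous_on UNIV (cutoff R)"
  unfolding cutoff_def divide_inverse by (intro continuous_intros)

lemma continuous_on_cutoff_power_grad: "continuous_on UNIV (cutoff_power_grad R m)"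
  unfolding cutoff_power_grad_def by (intro continuous_intros continuous_on_cutoff)

lemma cutoff_nonneg: "0 \<le> cutoff R x"
  by (simp add: cutoff_def)

lemma cutoff_le_1: "cutoff R x \<le> 1"
  by (simp add: cutoff_def)

lemma cutoff_pos_iff:
  fixes x :: "'a::euclidean_space"
  assumes "0 < R"
  shows "0 < cutoff R x \<longleftrightarrow> norm x < 2 * R"
proof -
  have "0 < cutoff R x \<longleftrightarrow> (x \<bullet> x) / (4 * R\<^sup>2) < 1" by (auto simp: cutoff_def less_max_iff_disj)
  also have "\<dots> \<longleftrightarrow> (norm x)\<^sup>2 < (2 * R)\<^sup>2"
    using assms by (simp add: divide_less_eq dot_square_norm power_mult_distrib)
  also have "\<dots> \<longleftrightarrow> norm x < 2 * R"
    using assms power_mono_iff[of "2 * R" "norm x" 2] by (simp add: not_le[symmetric])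
  finally show ?thesis .
qed

lemma cutoff_eq_0: "0 < R \<Longrightarrow> 2 * R \<le> norm x \<Longrightarrow> cutoff R x = 0"
  using cutoff_pos_iff[of R x] cutoff_nonneg[of R x] by linarith

lemma cutoff_power_grad_eq_0: "0 < R \<Longrightarrow> 2 * R \<le> norm x \<Longrightarrow> 2 \<le> m \<Longrightarrow> cutoff_power_grad R m x = 0"
  by (simp add: cutoff_power_grad_def cutoff_eq_0 power_0_left)

lemma cutoff_ge_three_quarters:
  fixes x :: "'a::euclidean_space"
  assumes R: "0 < R" and x: "norm x < R"
  shows "3 / 4 \<le> cutoff R x"
proof -
  have "x \<bullet> x < R\<^sup>2" using x by (simp add: dot_square_norm power_strict_mono)
  then have "(x \<bullet> x) / (4 * R\<^sup>2) < 1 / 4" using R by (simp add: divide_less_eq)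
  then show ?thesis by (simp add: cutoff_def)
qed

lemma norm_cutoff_power_grad_le:
  fixes x :: "'a::euclidean_space"
  assumes R: "0 < R" and m: "2 \<le> m"
  shows "norm (cutoff_power_grad R m x) \<le> real m / R * cutoff R x ^ (m - 1)"
proof (cases "norm x < 2 * R")
  case True
  have "norm (cutoff_power_grad R m x) = real m * cutoff R x ^ (m - 1) / (2 * R\<^sup>2) * norm x"
    unfolding cutoff_power_grad_def using R cutoff_nonneg[of R x] by (simp add: abs_mult)
  also have "\<dots> \<le> real m * cutoff R x ^ (m - 1) / (2 * R\<^sup>2) * (2 * R)"
    using True cutoff_nonneg[of R x] R by (intro mult_left_mono) auto
  also have "\<dots> = real m / R * cutoff R x ^ (m - 1)" using R by (simp add: field_simps power2_eq_square)
  finally show ?thesis .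
qed (use assms cutoff_nonneg[of R x] in \<open>simp add: cutoff_power_grad_eq_0\<close>)

definition test_function :: "('a::euclidean_space \<Rightarrow> real) \<Rightarrow> real \<Rightarrow> nat \<Rightarrow> 'a \<Rightarrow> real" where
  "test_function u R m x = (u x + 1) * cutoff R x ^ m"

definition test_function_grad ::
    "('a::euclidean_space \<Rightarrow> real) \<Rightarrow> ('a \<Rightarrow> 'a) \<Rightarrow> real \<Rightarrow> nat \<Rightarrow> 'a \<Rightarrow> 'a" where
  "test_function_grad u Gu R m x = (u x + 1) *\<^sub>R cutoff_power_grad R m x + cutoff R x ^ m *\<^sub>R Gu x"

lemma test_function_has_derivative:
  fixes u :: "'a::euclidean_space \<Rightarrow> real"
  assumes "2 \<le> m" "0 < R" and du: "(u has_derivative (\<lambda>h. Gu x \<bullet> h)) (at x)"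
  shows "(test_function u R m has_derivative (\<lambda>h. test_function_grad u Gu R m x \<bullet> h)) (at x)"
proof -
  have "((\<lambda>x. u x + 1) has_derivative (\<lambda>h. Gu x \<bullet> h)) (at x)"
    using du by (auto intro!: derivative_eq_intros)
  from has_derivative_mult[OF this cutoff_power_has_derivative[OF assms(1,2)]] show ?thesis
    unfolding test_function_def[abs_def] test_function_grad_def
    by (simp add: inner_add_left algebra_simps)
qed

lemma C1c_test_function:
  fixes u :: "'a::euclidean_space \<Rightarrow> real"
  assumes m: "2 \<le> m" and R: "0 < R" and Gu_cont: "continuous_on UNIV Gu"
    and du: "\<And>x. (u has_derivative (\<lambda>h. Gu x \<bullet> h)) (at x)"
  shows "C1c (test_function u R m)"
  unfolding C1c_def C1_def
proof (intro conjI exI allI impI)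
  have "continuous_on UNIV u"
    using du by (intro continuous_at_imp_continuous_on ballI has_derivative_continuous)
  then show "continuous_on UNIV (test_function_grad u Gu R m)"
    unfolding test_function_grad_def
    by (intro continuous_intros continuous_on_cutoff continuous_on_cutoff_power_grad Gu_cont)
  show "(test_function u R m has_derivative (\<lambda>h. test_function_grad u Gu R m x \<bullet> h)) (at x)" for x
    using m R du by (rule test_function_has_derivative)
  show "compact (cball (0::'a) (2 * R))" by simp
  show "test_function u R m x = 0" if "x \<notin> cball 0 (2 * R)" for x
    using that R m by (simp add: test_function_def cutoff_eq_0 power_0_left)
qed

lemma flux_test_function_grad_lower_bound:
  fixes u :: "'a::euclidean_space \<Rightarrow> real"
  assumes R: "0 < R" and p: "2 \<le> p" "p \<le> real m" and u: "0 < u x" "u x \<le> 1"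
  shows "- ((2 * real m / R) powr p) * indicator (ball 0 (2 * R)) x
    \<le> npow (norm (Gu x)) (p - 2) * (Gu x \<bullet> test_function_grad u Gu R m x)"
proof (cases "norm x < 2 * R")
  case True
  have m: "2 \<le> m" using p by linarith
  define a b z where "a = norm (Gu x)" and "b = norm (cutoff_power_grad R m x)" and "z = cutoff R x"
  have "- (2 * (a * b)) \<le> (u x + 1) * (Gu x \<bullet> cutoff_power_grad R m x)"
  proof -
    have "- (a * b) \<le> Gu x \<bullet> cutoff_power_grad R m x"
      using Cauchy_Schwarz_ineq2[of "Gu x" "cutoff_power_grad R m x"] unfolding a_def b_def by linarith
    then have "(u x + 1) * - (a * b) \<le> (u x + 1) * (Gu x \<bullet> cutoff_power_grad R m x)"
      using u by (intro mult_left_mono) auto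
    moreover have "(u x + 1) * (a * b) \<le> 2 * (a * b)"
      using u unfolding a_def b_def by (intro mult_right_mono) auto
    ultimately show ?thesis by linarith
  qed
  moreover have "Gu x \<bullet> test_function_grad u Gu R m x
      = (u x + 1) * (Gu x \<bullet> cutoff_power_grad R m x) + z ^ m * a\<^sup>2"
    unfolding test_function_grad_def a_def z_def by (simp add: inner_add_right power2_norm_eq_inner)
  ultimately have "z ^ m * a\<^sup>2 - 2 * a * b \<le> Gu x \<bullet> test_function_grad u Gu R m x"
    by simp
  then have "- ((2 * real m / R) powr p) \<le> npow a (p - 2) * (Gu x \<bullet> test_function_grad u Gu R m x)"
  proof (rule npow_mult_young_lower_bound[rotated -1])
    show "b \<le> 2 * real m / R / 2 * z ^ (m - 1)"
      unfolding b_def z_def using norm_cutoff_power_grad_le[OF R m] by simp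
  qed (use R p m in \<open>auto simp: a_def b_def z_def cutoff_nonneg cutoff_le_1\<close>)
  then show ?thesis using True by (simp add: a_def)
next
  case False
  then show ?thesis
    using R p by (simp add: test_function_grad_def cutoff_eq_0 cutoff_power_grad_eq_0 power_0_left)
qed

lemma fnl_le_minus_two:
  assumes "0 \<le> \<delta>" "0 \<le> \<gamma>" "0 < t" "t \<le> 1"
  shows "fnl \<delta> \<gamma> t \<le> -2"
proof -
  have "1 \<le> t powr (- \<delta>)" "1 \<le> t powr (- \<gamma>)"
    using assms powr_mono'[of "- \<delta>" 0 t] powr_mono'[of "- \<gamma>" 0 t] by auto
  then show ?thesis by (simp add: fnl_def)
qed

lemma continuous_on_fnl_comp:
  assumes "continuous_on UNIV u" "\<And>x. 0 < u x"
  shows "continuous_on UNIV (\<lambda>x. fnl \<delta> \<gamma> (u x))"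
  unfolding fnl_def using assms
  by (intro continuous_intros continuous_on_powr') (auto simp: less_imp_le order_less_imp_not_eq2)

lemma flux_integral_lower_bound:
  fixes w u :: "'a::euclidean_space \<Rightarrow> real"
  assumes w: "loc_integrable w" "AE x in lebesgue. 0 < w x"
    and Gu_cont: "continuous_on UNIV Gu" and u_cont: "continuous_on UNIV u"
    and u: "\<And>x. 0 < u x \<and> u x \<le> 1" and R: "0 < R" and p: "2 \<le> p" "p \<le> real m"
  shows "- ((2 * real m / R) powr p) * (LINT x|lebesgue. w x * indicator (ball 0 (2 * R)) x)
    \<le> (LINT x|lebesgue. w x * npow (norm (Gu x)) (p - 2) * (Gu x \<bullet> test_function_grad u Gu R m x))"
proof -
  have m: "2 \<le> m" using p by linarith
  have "set_integrable lebesgue (cball 0 (2 * R)) w"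
    using w(1) unfolding loc_integrable_def by simp
  then have "set_integrable lebesgue (ball 0 (2 * R)) w"
    by (rule set_integrable_subset) auto
  then have ball: "integrable lebesgue (\<lambda>x. w x * indicator (ball 0 (2 * R)) x)"
    unfolding set_integrable_def by (simp add: mult.commute)
  have "integrable lebesgue (\<lambda>x. w x * (npow (norm (Gu x)) (p - 2) * (Gu x \<bullet> test_function_grad u Gu R m x)))"
  proof (rule integrable_loc_integrable_mult[OF w(1) _ compact_cball[of 0 "2 * R"]])
    show "continuous_on UNIV (\<lambda>x. npow (norm (Gu x)) (p - 2) * (Gu x \<bullet> test_function_grad u Gu R m x))"
      unfolding test_function_grad_def
      by (intro continuous_intros continuous_on_npow_norm Gu_cont u_cont p continuous_on_cutoff
          continuous_on_cutoff_power_grad)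
    show "npow (norm (Gu x)) (p - 2) * (Gu x \<bullet> test_function_grad u Gu R m x) = 0"
      if "x \<notin> cball 0 (2 * R)" for x
      using that R m by (simp add: test_function_grad_def cutoff_eq_0 cutoff_power_grad_eq_0 power_0_left)
  qed
  then have flux: "integrable lebesgue
      (\<lambda>x. w x * npow (norm (Gu x)) (p - 2) * (Gu x \<bullet> test_function_grad u Gu R m x))"
    by (simp add: mult.assoc)
  have "AE x in lebesgue. - ((2 * real m / R) powr p) * (w x * indicator (ball 0 (2 * R)) x)
      \<le> w x * npow (norm (Gu x)) (p - 2) * (Gu x \<bullet> test_function_grad u Gu R m x)"
    using w(2)
  proof (rule AE_mp, intro AE_I2 impI)
    fix x assume "0 < w x"
    have "- ((2 * real m / R) powr p) * indicator (ball 0 (2 * R)) x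
        \<le> npow (norm (Gu x)) (p - 2) * (Gu x \<bullet> test_function_grad u Gu R m x)"
      using u[of x] by (intro flux_test_function_grad_lower_bound[OF R p]) auto
    from mult_left_mono[OF this less_imp_le[OF \<open>0 < w x\<close>]]
    show "- ((2 * real m / R) powr p) * (w x * indicator (ball 0 (2 * R)) x)
        \<le> w x * npow (norm (Gu x)) (p - 2) * (Gu x \<bullet> test_function_grad u Gu R m x)"
      by (simp add: algebra_simps)
  qed
  from integral_mono_AE[OF integrable_mult_right[OF ball] flux this] show ?thesis by simp
qed

lemma source_integral_upper_bound:
  fixes g u :: "'a::euclidean_space \<Rightarrow> real"
  assumes g: "loc_integrable g" "AE x in lebesgue. 1 / M \<le> g x" and M: "0 < M"
    and u_cont: "continuous_on UNIV u" and u: "\<And>x. 0 < u x \<and> u x \<le> 1"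
    and \<delta>\<gamma>: "0 \<le> \<delta>" "0 \<le> \<gamma>" and R: "0 < R" and m: "1 \<le> m"
  shows "(LINT x|lebesgue. g x * fnl \<delta> \<gamma> (u x) * test_function u R m x)
    \<le> - (2 / M * (3 / 4) ^ m * measure lebesgue (ball (0::'a) R))"
proof -
  have "integrable lebesgue (\<lambda>x. g x * (fnl \<delta> \<gamma> (u x) * test_function u R m x))"
  proof (rule integrable_loc_integrable_mult[OF g(1) _ compact_cball[of 0 "2 * R"]])
    show "continuous_on UNIV (\<lambda>x. fnl \<delta> \<gamma> (u x) * test_function u R m x)"
      unfolding test_function_def using u
      by (intro continuous_intros continuous_on_fnl_comp u_cont continuous_on_cutoff) auto
    show "fnl \<delta> \<gamma> (u x) * test_function u R m x = 0" if "x \<notin> cball 0 (2 * R)" for x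
      using that R m by (simp add: test_function_def cutoff_eq_0 power_0_left)
  qed
  then have source: "integrable lebesgue (\<lambda>x. g x * fnl \<delta> \<gamma> (u x) * test_function u R m x)"
    by (simp add: mult.assoc)
  have ball: "integrable lebesgue (\<lambda>x. - 2 / M * (3 / 4) ^ m * indicator (ball (0::'a) R) x)"
    by (intro integrable_mult_right integrable_real_indicator) (use emeasure_lborel_ball_finite in auto)
  have "AE x in lebesgue. g x * fnl \<delta> \<gamma> (u x) * test_function u R m x
      \<le> - 2 / M * (3 / 4) ^ m * indicator (ball (0::'a) R) x"
    using g(2)
  proof (rule AE_mp, intro AE_I2 impI)
    fix x assume gx: "1 / M \<le> g x"
    have "0 < g x" using M by (smt (verit) divide_pos_pos gx)
    have \<psi>\<phi>: "cutoff R x ^ m \<le> test_function u R m x"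
      using u[of x] cutoff_nonneg[of R x] by (simp add: test_function_def mult_le_cancel_right1)
    then have "0 \<le> g x * test_function u R m x"
      using \<open>0 < g x\<close> cutoff_nonneg[of R x] by (simp add: order_trans[OF zero_le_power])
    from mult_left_mono[OF fnl_le_minus_two[OF \<delta>\<gamma> u[of x, THEN conjunct1] u[of x, THEN conjunct2]] this]
    have source: "g x * fnl \<delta> \<gamma> (u x) * test_function u R m x \<le> -2 * (g x * test_function u R m x)"
      by (simp add: mult_ac)
    show "g x * fnl \<delta> \<gamma> (u x) * test_function u R m x \<le> - 2 / M * (3 / 4) ^ m * indicator (ball 0 R) x"
    proof (cases "norm x < R")
      case True
      then have "(3 / 4) ^ m \<le> cutoff R x ^ m"
        using cutoff_ge_three_quarters[OF R] by (intro power_mono) auto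
      then have "1 / M * (3 / 4) ^ m \<le> g x * test_function u R m x"
        using gx \<open>0 < g x\<close> \<psi>\<phi> by (intro mult_mono) auto
      moreover have "- 2 / M * (3 / 4) ^ m = -2 * (1 / M * (3 / 4) ^ m)" by simp
      ultimately show ?thesis using True source by simp
    next
      case False
      then show ?thesis using source \<open>0 \<le> g x * test_function u R m x\<close> by simp
    qed
  qed
  from integral_mono_AE[OF source ball this] show ?thesis by simp
qed

lemma measure_lebesgue_ball_0:
  "0 \<le> r \<Longrightarrow> measure lebesgue (ball (0::'a::euclidean_space) r) = unit_ball_vol DIM('a) * r ^ DIM('a)"
  using content_ball[of r 0] by simp

lemma weak_sol_energy_estimate:
  fixes w g u :: "'a::euclidean_space \<Rightarrow> real"
  assumes w: "loc_integrable w" "AE x in lebesgue. 0 < w x"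
    and g: "loc_integrable g" "AE x in lebesgue. 1 / M \<le> g x" and M: "0 < M"
    and Gu_cont: "continuous_on UNIV Gu" and du: "\<And>x. (u has_derivative (\<lambda>h. Gu x \<bullet> h)) (at x)"
    and u: "\<And>x. 0 < u x \<and> u x \<le> 1" and weak: "weak_sol w g \<delta> \<gamma> p u" and \<delta>\<gamma>: "0 \<le> \<delta>" "0 \<le> \<gamma>"
    and p: "2 \<le> p" "p \<le> real m" and R: "0 < R"
  shows "2 / M * (3 / 4) ^ m * unit_ball_vol DIM('a)
    \<le> (2 * real m) powr p * ((LINT x|lebesgue. w x * indicator (ball 0 (2 * R)) x) / R powr (p + DIM('a)))"
proof -
  have m: "2 \<le> m" using p by linarith
  have u_cont: "continuous_on UNIV u"
    using du by (intro continuous_at_imp_continuous_on ballI has_derivative_continuous)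
  have "C1c (test_function u R m)" using m R Gu_cont du by (rule C1c_test_function)
  then have "(LINT x|lebesgue. w x * npow (norm (grad u x)) (p - 2) * (grad u x \<bullet> grad (test_function u R m) x))
      = (LINT x|lebesgue. g x * fnl \<delta> \<gamma> (u x) * test_function u R m x)"
    using weak unfolding weak_sol_def by blast
  moreover have "grad u x = Gu x" for x
    using du by (rule grad_eqI)
  moreover have "grad (test_function u R m) x = test_function_grad u Gu R m x" for x
    by (rule grad_eqI[OF test_function_has_derivative[OF m R du]])
  ultimately have "(LINT x|lebesgue. w x * npow (norm (Gu x)) (p - 2) * (Gu x \<bullet> test_function_grad u Gu R m x))
      = (LINT x|lebesgue. g x * fnl \<delta> \<gamma> (u x) * test_function u R m x)"
    by simp
  with flux_integral_lower_bound[OF w Gu_cont u_cont u R p]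
    source_integral_upper_bound[OF g M u_cont u \<delta>\<gamma> R, of m] m
  have "2 / M * (3 / 4) ^ m * measure lebesgue (ball (0::'a) R)
      \<le> (2 * real m / R) powr p * (LINT x|lebesgue. w x * indicator (ball 0 (2 * R)) x)"
    by linarith
  then have "2 / M * (3 / 4) ^ m * unit_ball_vol DIM('a) * R ^ DIM('a)
      \<le> (2 * real m / R) powr p * (LINT x|lebesgue. w x * indicator (ball 0 (2 * R)) x)"
    unfolding measure_lebesgue_ball_0[OF less_imp_le[OF R]] by (simp add: mult.assoc)
  also have "\<dots> = (2 * real m) powr p * ((LINT x|lebesgue. w x * indicator (ball 0 (2 * R)) x)
      / R powr (p + DIM('a))) * R ^ DIM('a)"
    using R by (simp add: powr_divide powr_add powr_realpow)
  finally show ?thesis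
    by (rule mult_right_le_imp_le) (use R in simp)
qed

lemma S_pa_gt_1:
  assumes P: "class_Pa \<delta> p" and \<delta>: "0 < \<delta>" and p: "2 \<le> p"
  shows "1 < S_pa \<delta> p"
proof -
  have "0 < s_p \<delta> p"
  proof (cases "p = 2")
    case True
    then show ?thesis using \<delta> by (simp add: s_p_def add_pos_nonneg)
  next
    case False
    have "(p - 1)\<^sup>2 < 4 * \<delta>"
      using P unfolding class_Pa_def
    proof (elim disjE conjE)
      assume "2 \<le> p" "p < 3" "1 \<le> \<delta>"
      moreover have "(p - 1)\<^sup>2 < 2\<^sup>2" using \<open>2 \<le> p\<close> \<open>p < 3\<close> by (intro power_strict_mono) auto
      ultimately show ?thesis by simp
    qed (auto simp: power2_eq_square)
    then have "(p - 1) / 2 < 2 * \<delta> / (p - 1)"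
      using p False by (simp add: field_simps power2_eq_square)
    then show ?thesis using False by (simp add: s_p_def)
  qed
  moreover have "0 < p - 1 + \<delta>" using p \<delta> by simp
  ultimately show ?thesis by (simp add: S_pa_def)
qed

lemma AE_bounded_reciprocal_imp_ge:
  fixes g :: "'a \<Rightarrow> real"
  assumes "AE x in F. \<bar>1 / g x\<bar> \<le> B" "AE x in F. 0 < g x"
  shows "AE x in F. 1 / max B 1 \<le> g x"
  using assms
proof (rule AE_mp[OF AE_conjI], intro AE_I2 impI)
  fix x assume "\<bar>1 / g x\<bar> \<le> B \<and> 0 < g x"
  then have "1 / g x \<le> max B 1" "0 < g x" by auto
  then show "1 / max B 1 \<le> g x" by (simp add: divide_le_eq mult.commute)
qed

lemma le_powr_split:
  fixes v t S :: real
  assumes v: "0 \<le> v" and t: "0 < t" and S: "1 \<le> S"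
  shows "v \<le> t powr (1 - S) * v powr S + t"
proof (cases "t \<le> v")
  case True
  then have "v = v powr S * v powr (1 - S)" using t by (simp add: powr_add[symmetric])
  also have "\<dots> \<le> v powr S * t powr (1 - S)"
    using True t S by (intro mult_left_mono powr_mono2') auto
  finally show ?thesis using t by (metis add_increasing2 less_imp_le mult.commute)
next
  case False
  then show ?thesis by (simp add: add_increasing)
qed

lemma integral_le_powr_split:
  fixes w :: "'a \<Rightarrow> real"
  assumes w[measurable]: "w \<in> borel_measurable M" and w_nonneg: "AE x in M. 0 \<le> w x"
    and B[measurable]: "B \<in> sets M" and B_fin: "emeasure M B < \<infinity>"
    and t: "0 < t" and S: "1 \<le> S"
    and Q: "set_nn_integral M B (\<lambda>x. ennreal (w x powr S)) \<le> ennreal Q" "0 \<le> Q"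
  shows "(LINT x|M. w x * indicator B x) \<le> t powr (1 - S) * Q + t * measure M B"
proof -
  have "AE x in M. ennreal (w x * indicator B x)
      \<le> ennreal (t powr (1 - S)) * (ennreal (w x powr S) * indicator B x) + ennreal t * indicator B x"
    using w_nonneg
  proof (rule AE_mp, intro AE_I2 impI)
    fix x assume "0 \<le> w x"
    then have "ennreal (w x) \<le> ennreal (t powr (1 - S) * w x powr S + t)"
      using t S by (intro ennreal_leI le_powr_split)
    then show "ennreal (w x * indicator B x)
        \<le> ennreal (t powr (1 - S)) * (ennreal (w x powr S) * indicator B x) + ennreal t * indicator B x"
      using t by (simp add: indicator_def ennreal_plus ennreal_mult)
  qed
  then have "(\<integral>\<^sup>+ x. ennreal (w x * indicator B x) \<partial>M)
      \<le> ennreal (t powr (1 - S)) * set_nn_integral M B (\<lambda>x. ennreal (w x powr S)) + ennreal t * emeasure M B"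
    by (auto dest!: nn_integral_mono_AE simp: nn_integral_add nn_integral_cmult)
  also have "\<dots> \<le> ennreal (t powr (1 - S) * Q + t * measure M B)"
    using Q t B_fin
    by (auto simp: ennreal_plus ennreal_mult emeasure_eq_ennreal_measure intro!: add_mono mult_left_mono)
  finally have "(\<integral>\<^sup>+ x. ennreal (w x * indicator B x) \<partial>M) \<le> ennreal (t powr (1 - S) * Q + t * measure M B)" .
  moreover have "(LINT x|M. w x * indicator B x) = enn2real (\<integral>\<^sup>+ x. ennreal (w x * indicator B x) \<partial>M)"
    using w_nonneg by (intro integral_eq_nn_integral) (auto elim!: AE_mp)
  ultimately show ?thesis
    using Q t by (metis enn2real_ennreal enn2real_mono ennreal_less_top add_nonneg_nonneg
        measure_nonneg mult_nonneg_nonneg powr_ge_zero less_imp_le)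
qed

text \<open>The level \<open>t = R^\<alpha>\<close> with \<open>\<alpha> = (\<lambda> - N) / S\<close> makes both terms of the split bound of
  order \<open>R^(\<alpha> + N)\<close>.\<close>

lemma ball_weight_integral_le:
  fixes w :: "'a::euclidean_space \<Rightarrow> real" and S C R lam p :: real
  assumes w: "loc_integrable w" "AE x in lebesgue. 0 < w x"
    and S: "1 \<le> S" and C: "0 \<le> C" and R: "1 \<le> R"
    and growth: "set_nn_integral lebesgue (ball 0 (2 * R)) (\<lambda>x. ennreal (w x powr S))
                 \<le> ennreal (C * R powr lam)"
  shows "(LINT x|lebesgue. w x * indicator (ball 0 (2 * R)) x) / R powr (p + DIM('a))
    \<le> (C + unit_ball_vol DIM('a) * 2 ^ DIM('a)) * R powr ((lam - DIM('a)) / S - p)"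
proof -
  define N where "N = DIM('a)"
  define \<alpha> where "\<alpha> = (lam - N) / S"
  have "\<alpha> * (1 - S) + lam = \<alpha> + N" using S by (simp add: \<alpha>_def field_simps)
  then have first: "(R powr \<alpha>) powr (1 - S) * R powr lam = R powr (\<alpha> + N)"
    by (simp only: powr_powr powr_add[symmetric])
  have second: "R powr \<alpha> * (2 * R) ^ N = 2 ^ N * R powr (\<alpha> + N)"
    using R by (simp add: power_mult_distrib powr_add powr_realpow)
  have "(LINT x|lebesgue. w x * indicator (ball 0 (2 * R)) x)
      \<le> (R powr \<alpha>) powr (1 - S) * (C * R powr lam) + R powr \<alpha> * measure lebesgue (ball (0::'a) (2 * R))"
    using growth S C R w(2)
    by (intro integral_le_powr_split loc_integrable_borel_measurable[OF w(1)])
      (use emeasure_lborel_ball_finite in \<open>auto elim!: AE_mp\<close>)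
  also have "\<dots> = C * ((R powr \<alpha>) powr (1 - S) * R powr lam) + unit_ball_vol N * (R powr \<alpha> * (2 * R) ^ N)"
    using measure_lebesgue_ball_0[where 'a='a, of "2 * R"] R by (simp add: N_def algebra_simps)
  also have "\<dots> = (C + unit_ball_vol N * 2 ^ N) * (R powr (\<alpha> - p) * R powr (p + N))"
    unfolding first second by (simp add: algebra_simps flip: powr_add)
  finally show ?thesis using R by (simp add: divide_le_eq N_def \<alpha>_def)
qed

lemma ball_weight_integral_decay:
  fixes w :: "'a::euclidean_space \<Rightarrow> real" and S C lam p :: real
  assumes w: "loc_integrable w" "AE x in lebesgue. 0 < w x"
    and S: "1 \<le> S" and lam: "lam < p * S" and C: "0 \<le> C"
    and growth: "\<forall>R\<ge>1. set_nn_integral lebesgue (ball 0 (2 * R)) (\<lambda>x. ennreal (w x powr S))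
                 \<le> ennreal (C * R powr lam)"
  shows "((\<lambda>R. (LINT x|lebesgue. w x * indicator (ball 0 (2 * R)) x) / R powr (p + DIM('a)))
    \<longlongrightarrow> 0) at_top"
proof (rule tendsto_sandwich[OF _ _ tendsto_const])
  show "\<forall>\<^sub>F R in at_top. 0 \<le> (LINT x|lebesgue. w x * indicator (ball 0 (2 * R)) x) / R powr (p + DIM('a))"
  proof (rule always_eventually, rule allI)
    show "0 \<le> (LINT x|lebesgue. w x * indicator (ball 0 (2 * R)) x) / R powr (p + DIM('a))" for R
      using w(2) by (intro divide_nonneg_nonneg integral_nonneg_AE) (auto elim!: AE_mp)
  qed
  show "\<forall>\<^sub>F R in at_top. (LINT x|lebesgue. w x * indicator (ball 0 (2 * R)) x) / R powr (p + DIM('a))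
      \<le> (C + unit_ball_vol DIM('a) * 2 ^ DIM('a)) * R powr ((lam - DIM('a)) / S - p)"
    using eventually_ge_at_top[of 1]
    by (rule eventually_mono) (simp add: ball_weight_integral_le[OF w S C] growth)
  have "(lam - DIM('a)) / S < p" using S lam by (simp add: divide_less_eq)
  then show "((\<lambda>R. (C + unit_ball_vol DIM('a) * 2 ^ DIM('a)) * R powr ((lam - DIM('a)) / S - p))
      \<longlongrightarrow> 0) at_top"
    by (intro tendsto_mult_right_zero tendsto_neg_powr filterlim_ident) simp
qed

theorem theorem3p2:
  fixes w g :: "'a::euclidean_space \<Rightarrow> real" and p \<delta> \<gamma> lam C :: real
  assumes "p \<ge> 2"
    and "loc_integrable w" and "loc_integrable g"
    and "AE x in lebesgue. w x > 0" and "AE x in lebesgue. g x > 0"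
    and "\<exists>M. AE x in lebesgue. \<bar>1 / g x\<bar> \<le> M"
    and "0 < \<delta>" and "\<delta> < \<gamma>" and "class_Pa \<delta> p"
    and "lam > 0" and "C > 0" and "lam < p * S_pa \<delta> p"
    and "\<forall>R\<ge>1. set_nn_integral lebesgue (ball 0 (2 * R)) (\<lambda>x. ennreal (w x powr S_pa \<delta> p))
                 \<le> ennreal (C * R powr lam)"
  shows "\<not> (\<exists>u. C1 u \<and> (\<forall>x. 0 < u x \<and> u x \<le> 1) \<and> weak_sol w g \<delta> \<gamma> p u \<and> stable_sol w g \<delta> \<gamma> p u)"
proof
  assume "\<exists>u. C1 u \<and> (\<forall>x. 0 < u x \<and> u x \<le> 1) \<and> weak_sol w g \<delta> \<gamma> p u \<and> stable_sol w g \<delta> \<gamma> p u"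
  then obtain u Gu where u: "\<And>x. 0 < u x \<and> u x \<le> 1" and weak: "weak_sol w g \<delta> \<gamma> p u"
    and Gu_cont: "continuous_on UNIV Gu" and du: "\<And>x. (u has_derivative (\<lambda>h. Gu x \<bullet> h)) (at x)"
    unfolding C1_def by blast
  obtain B where "AE x in lebesgue. \<bar>1 / g x\<bar> \<le> B" using assms(6) by blast
  from AE_bounded_reciprocal_imp_ge[OF this assms(5)]
  have gM: "AE x in lebesgue. 1 / max B 1 \<le> g x" .
  define m where "m = nat \<lceil>p\<rceil>"
  have mp: "p \<le> real m" unfolding m_def by linarith
  have "((\<lambda>R. (2 * real m) powr p * ((LINT x|lebesgue. w x * indicator (ball 0 (2 * R)) x)
      / R powr (p + DIM('a)))) \<longlongrightarrow> 0) at_top"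
    using S_pa_gt_1[OF assms(9,7,1)] assms(11,12,13,2,4)
    by (intro tendsto_mult_right_zero ball_weight_integral_decay) auto
  moreover have "\<forall>\<^sub>F R in at_top. 2 / max B 1 * (3 / 4) ^ m * unit_ball_vol DIM('a)
      \<le> (2 * real m) powr p * ((LINT x|lebesgue. w x * indicator (ball 0 (2 * R)) x) / R powr (p + DIM('a)))"
    using eventually_gt_at_top[of 0] by (rule eventually_mono)
      (rule weak_sol_energy_estimate[OF assms(2,4,3) gM _ Gu_cont du u weak _ _ assms(1) mp],
        use assms(7,8) in auto)
  ultimately have "2 / max B 1 * (3 / 4) ^ m * unit_ball_vol DIM('a) \<le> 0"
    by (rule tendsto_lowerbound) simp
  moreover have "0 < 2 / max B 1 * (3 / 4) ^ m * unit_ball_vol DIM('a)" by simp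
  ultimately show False by linarith
qed

end
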